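(* Let $n,k$ be integers with $1 \leq k \leq n$ and let $q$ be a prime power with $q > \binom{n-1}{k-1}$. Then there exists an $[n,k]_q$ MDS code that has a $k \times n$ generator matrix $\mathbf{G}$ over $\mathbb{F}_q$ satisfying both of the following: (C1) (sparsest) each row of $\mathbf{G}$ has Hamming weight $n-k+1$; (C2) (balanced) the Hamming weights of the columns of $\mathbf{G}$ differ from each other by at most one.
   Context: $\mathbb{F}_q$ is the finite field with $q$ elements. The Hamming weight of a vector is the number of its nonzero coordinates; rows and columns of a matrix are regarded as vectors. An $[n,k]_q$ MDS code is a linear code of length $n$ and dimension $k$ over $\mathbb{F}_q$ with minimum distance $n-k+1$. *)

theory Defs
  imports Main
begin

text \<open>Vectors of length n over a field are functions nat => 'a, only the
coordinates 0..<n matter.  A k x n matrix is a function nat => nat => 'a,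
entries G i j with i < k, j < n.\<close>

definition hamming_weight :: "nat \<Rightarrow> (nat \<Rightarrow> 'a::zero) \<Rightarrow> nat" where
  "hamming_weight n v = card {j. j < n \<and> v j \<noteq> 0}"

definition hamming_dist :: "nat \<Rightarrow> (nat \<Rightarrow> 'a) \<Rightarrow> (nat \<Rightarrow> 'a) \<Rightarrow> nat" where
  "hamming_dist n u v = card {j. j < n \<and> u j \<noteq> v j}"

definition row_space :: "nat \<Rightarrow> nat \<Rightarrow> (nat \<Rightarrow> nat \<Rightarrow> 'a::comm_ring_1) \<Rightarrow> (nat \<Rightarrow> 'a) set" where
  "row_space k n G = {(\<lambda>j. if j < n then (\<Sum>i<k. m i * G i j) else 0) | m. True}"

definition rows_independent :: "nat \<Rightarrow> nat \<Rightarrow> (nat \<Rightarrow> nat \<Rightarrow> 'a::comm_ring_1) \<Rightarrow> bool" where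
  "rows_independent k n G \<longleftrightarrow>
     (\<forall>m. (\<forall>j<n. (\<Sum>i<k. m i * G i j) = 0) \<longrightarrow> (\<forall>i<k. m i = 0))"

definition min_distance :: "nat \<Rightarrow> (nat \<Rightarrow> 'a) set \<Rightarrow> nat" where
  "min_distance n C = Min {hamming_dist n u v | u v. u \<in> C \<and> v \<in> C \<and> u \<noteq> v}"

definition generates_MDS :: "nat \<Rightarrow> nat \<Rightarrow> (nat \<Rightarrow> nat \<Rightarrow> 'a::field) \<Rightarrow> bool" where
  "generates_MDS k n G \<longleftrightarrow>
     rows_independent k n G \<and> min_distance n (row_space k n G) = n - k + 1"

definition row_weight :: "nat \<Rightarrow> (nat \<Rightarrow> nat \<Rightarrow> 'a::zero) \<Rightarrow> nat \<Rightarrow> nat" where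
  "row_weight n G i = hamming_weight n (\<lambda>j. G i j)"

definition col_weight :: "nat \<Rightarrow> (nat \<Rightarrow> nat \<Rightarrow> 'a::zero) \<Rightarrow> nat \<Rightarrow> nat" where
  "col_weight k G j = hamming_weight k (\<lambda>i. G i j)"

end

theory Submission
  imports Defs "Jordan_Normal_Form.Determinant"
begin

text \<open>Let row i of the generator matrix vanish exactly on the k - 1 cyclically consecutive columns
  starting at \<lfloor>i n / k\<rfloor>. Then every row has weight n - k + 1, and since the starting points
  are evenly spread, each column contains \<lfloor>k (k - 1) / n\<rfloor> or \<lfloor>k (k - 1) / n\<rfloor> + 1 zeros.

  For every set J of k columns this pattern admits a perfect matching between the rows and the
  columns of J avoiding the zeros: listing J increasingly, a suitable cyclic shift works. The
  nonzero entries are then chosen column by column, maintaining that for every J the minor on the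
  columns of J already filled and on their matched rows is nonsingular. Adding column t, each such
  minor for a J containing t is a linear form in the new column whose coefficient at the matched
  row is the previous minor, hence nonzero; at most C(n - 1, k - 1) < q sets J contain t, so some
  column avoids all these hyperplanes. In the end every k x k minor is nonzero, i.e. every k
  columns are independent, which makes the code MDS.\<close>

section \<open>Avoiding finitely many hyperplanes\<close>

lemma card_affine_roots_le_1:
  fixes a b :: "'a::field"
  assumes "a \<noteq> 0 \<or> b \<noteq> 0"
  shows "card {x. a + b * x = 0} \<le> 1"
proof (cases "b = 0")
  case False
  then have "{x. a + b * x = 0} = {- a / b}"
    by (auto simp: field_simps add_eq_0_iff)
  then show ?thesis by simp
qed (use assms in simp)

lemma exists_point_off_affine_roots:
  fixes a b :: "'i \<Rightarrow> 'a::{finite,field}"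
  assumes "finite F" "card F < card (UNIV :: 'a set)" "\<forall>c\<in>F. a c \<noteq> 0 \<or> b c \<noteq> 0"
  shows "\<exists>x. \<forall>c\<in>F. a c + b c * x \<noteq> 0"
proof -
  have "card (\<Union>c\<in>F. {x. a c + b c * x = 0}) \<le> (\<Sum>c\<in>F. card {x. a c + b c * x = 0})"
    by (rule card_UN_le[OF assms(1)])
  also have "\<dots> \<le> (\<Sum>c\<in>F. 1)"
    using card_affine_roots_le_1 assms(3) by (intro sum_mono) blast
  also have "\<dots> = card F" by simp
  finally have "card (\<Union>c\<in>F. {x. a c + b c * x = 0}) < card (UNIV :: 'a set)"
    using assms(2) by linarith
  then have "(\<Union>c\<in>F. {x. a c + b c * x = 0}) \<noteq> UNIV" by auto
  then show ?thesis by blast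
qed

lemma exists_vector_avoiding_forms_Suc:
  fixes F :: "(nat \<Rightarrow> 'a::{finite,field}) set"
  assumes "finite F" "card F < card (UNIV :: 'a set)"
    and F: "\<forall>c\<in>F. \<exists>i\<in>I. i < Suc p \<and> c i \<noteq> 0"
    and g: "\<forall>c\<in>F. (\<exists>i\<in>I. i < p \<and> c i \<noteq> 0) \<longrightarrow> (\<Sum>i<p. c i * g i) \<noteq> 0"
  shows "\<exists>x. (p \<notin> I \<longrightarrow> x = 0) \<and> (\<forall>c\<in>F. (\<Sum>i<Suc p. c i * (g(p := x)) i) \<noteq> 0)"
proof -
  have nz: "(\<Sum>i<p. c i * g i) \<noteq> 0 \<or> (p \<in> I \<and> c p \<noteq> 0)" if c: "c \<in> F" for c
  proof -
    obtain i where i: "i \<in> I" "i < Suc p" "c i \<noteq> 0" using F c by blast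
    show ?thesis
    proof (cases "i < p")
      case True
      then show ?thesis using g c i by blast
    next
      case False
      then show ?thesis using i by (simp add: less_Suc_eq)
    qed
  qed
  have sum: "(\<Sum>i<Suc p. c i * (g(p := x)) i) = (\<Sum>i<p. c i * g i) + c p * x" for c x
    by simp
  show ?thesis
  proof (cases "p \<in> I")
    case True
    obtain x where "\<forall>c\<in>F. (\<Sum>i<p. c i * g i) + c p * x \<noteq> 0"
      using exists_point_off_affine_roots[OF assms(1,2), of "\<lambda>c. \<Sum>i<p. c i * g i" "\<lambda>c. c p"] nz
      by blast
    then show ?thesis unfolding sum using True by blast
  next
    case False
    then show ?thesis unfolding sum using nz by (intro exI[of _ 0]) simp
  qed
qed

lemma exists_vector_avoiding_forms:
  fixes F :: "(nat \<Rightarrow> 'a::{finite,field}) set"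
  assumes "finite F" "card F < card (UNIV :: 'a set)" "\<forall>c\<in>F. \<exists>i\<in>I. i < p \<and> c i \<noteq> 0"
  shows "\<exists>g. (\<forall>i. i \<notin> I \<or> p \<le> i \<longrightarrow> g i = 0) \<and> (\<forall>c\<in>F. (\<Sum>i<p. c i * g i) \<noteq> 0)"
  using assms
proof (induction p arbitrary: F)
  case 0
  then show ?case by (intro exI[of _ "\<lambda>_. 0"]) auto
next
  case (Suc p F)
  define A where "A = {c\<in>F. \<exists>i\<in>I. i < p \<and> c i \<noteq> 0}"
  have "A \<subseteq> F" unfolding A_def by auto
  then have "finite A" "card A < card (UNIV :: 'a set)"
    using Suc.prems(1,2) card_mono[of F A] by (auto intro: finite_subset)
  moreover have "\<forall>c\<in>A. \<exists>i\<in>I. i < p \<and> c i \<noteq> 0" unfolding A_def by blast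
  ultimately obtain g
    where g: "\<forall>i. i \<notin> I \<or> p \<le> i \<longrightarrow> g i = 0" "\<forall>c\<in>A. (\<Sum>i<p. c i * g i) \<noteq> 0"
    using Suc.IH by blast
  have "\<forall>c\<in>F. (\<exists>i\<in>I. i < p \<and> c i \<noteq> 0) \<longrightarrow> (\<Sum>i<p. c i * g i) \<noteq> 0"
    using g(2) unfolding A_def by blast
  then obtain x where x: "p \<notin> I \<longrightarrow> x = 0" "\<forall>c\<in>F. (\<Sum>i<Suc p. c i * (g(p := x)) i) \<noteq> 0"
    using exists_vector_avoiding_forms_Suc[OF Suc.prems] by blast
  have "\<forall>i. i \<notin> I \<or> Suc p \<le> i \<longrightarrow> (g(p := x)) i = 0"
    using g(1) x(1) by (auto simp: Suc_le_eq)
  then show ?case using x(2) by blast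
qed

lemma exists_vector_avoiding_linear_forms:
  fixes F :: "((nat \<Rightarrow> 'a::{finite,field}) \<Rightarrow> 'a) set"
  assumes "finite F" "card F < card (UNIV :: 'a set)"
    and "\<forall>f\<in>F. \<exists>c. (\<forall>g. f g = (\<Sum>i<k. c i * g i)) \<and> (\<exists>i\<in>I. i < k \<and> c i \<noteq> 0)"
  shows "\<exists>g. (\<forall>i. i \<notin> I \<longrightarrow> g i = 0) \<and> (\<forall>f\<in>F. f g \<noteq> 0)"
proof -
  obtain C where C: "\<And>f. f \<in> F \<Longrightarrow> (\<forall>g. f g = (\<Sum>i<k. C f i * g i)) \<and> (\<exists>i\<in>I. i < k \<and> C f i \<noteq> 0)"
    using bchoice[OF assms(3)] by blast
  have "card (C ` F) < card (UNIV :: 'a set)"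
    using card_image_le[OF assms(1), of C] assms(2) by linarith
  moreover have "\<forall>c\<in>C ` F. \<exists>i\<in>I. i < k \<and> c i \<noteq> 0" using C by blast
  ultimately obtain g
    where "\<forall>i. i \<notin> I \<or> k \<le> i \<longrightarrow> g i = 0" "\<forall>c\<in>C ` F. (\<Sum>i<k. c i * g i) \<noteq> 0"
    using exists_vector_avoiding_forms[of "C ` F" I k] assms(1) by blast
  then show ?thesis using C by (intro exI[of _ g]) auto
qed

definition minor_mat :: "(nat \<Rightarrow> nat \<Rightarrow> 'a) \<Rightarrow> (nat \<Rightarrow> nat) \<Rightarrow> (nat \<Rightarrow> nat) \<Rightarrow> nat \<Rightarrow> 'a mat" where
  "minor_mat G r c p = mat p p (\<lambda>(a, b). G (r a) (c b))"

lemma minor_mat_carrier: "minor_mat G r c p \<in> carrier_mat p p"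
  unfolding minor_mat_def by simp

lemma minor_mat_index [simp]: "a < p \<Longrightarrow> b < p \<Longrightarrow> minor_mat G r c p $$ (a, b) = G (r a) (c b)"
  unfolding minor_mat_def by simp

lemma minor_mat_cong:
  assumes "\<And>a b. a < p \<Longrightarrow> b < p \<Longrightarrow> G (r a) (c b) = H (r' a) (c' b)"
  shows "minor_mat G r c p = minor_mat H r' c' p"
  using assms unfolding minor_mat_def by (intro eq_matI) auto

lemma mat_delete_minor_mat_last_col:
  "mat_delete (minor_mat G r c (Suc p)) a p = minor_mat G (\<lambda>i. r (insert_index a i)) c p"
  unfolding mat_delete_def minor_mat_def insert_index_def by (intro eq_matI) auto

definition set_col :: "(nat \<Rightarrow> nat \<Rightarrow> 'a) \<Rightarrow> nat \<Rightarrow> (nat \<Rightarrow> 'a) \<Rightarrow> nat \<Rightarrow> nat \<Rightarrow> 'a" where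
  "set_col G t g = (\<lambda>i j. if j = t then g i else G i j)"

lemma minor_mat_set_col_other:
  assumes "\<And>b. b < p \<Longrightarrow> c b \<noteq> t"
  shows "minor_mat (set_col G t g) r c p = minor_mat G r c p"
  using assms unfolding set_col_def by (intro minor_mat_cong) auto

text \<open>Only the last column of the minor is taken from column t, so expanding along it gives a
  linear form in the new column.\<close>

lemma det_minor_mat_set_col_linear:
  fixes G :: "nat \<Rightarrow> nat \<Rightarrow> 'a::comm_ring_1"
  assumes r: "inj_on r {..<Suc p}" "r ` {..<Suc p} \<subseteq> {..<k}"
    and c: "c p = t" "\<And>b. b < p \<Longrightarrow> c b \<noteq> t"
  shows "\<exists>w. (\<forall>g. det (minor_mat (set_col G t g) r c (Suc p)) = (\<Sum>i<k. w i * g i))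
            \<and> w (r p) = det (minor_mat G r c p)"
proof -
  define cof where "cof a = cofactor (minor_mat G r c (Suc p)) a p" for a
  define w where "w i = (if i \<in> r ` {..<Suc p} then cof (inv_into {..<Suc p} r i) else 0)" for i
  have "det (minor_mat (set_col G t g) r c (Suc p)) = (\<Sum>i<k. w i * g i)" for g
  proof -
    have cof_eq: "cofactor (minor_mat (set_col G t g) r c (Suc p)) a p = cof a" for a
      unfolding cof_def cofactor_def mat_delete_minor_mat_last_col
      using minor_mat_set_col_other c(2) by metis
    have "det (minor_mat (set_col G t g) r c (Suc p))
        = (\<Sum>a<Suc p. g (r a) * cofactor (minor_mat (set_col G t g) r c (Suc p)) a p)"
      using laplace_expansion_column[OF minor_mat_carrier[of "set_col G t g" r c "Suc p"], of p] c(1)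
      by (simp add: set_col_def)
    also have "\<dots> = (\<Sum>a<Suc p. w (r a) * g (r a))"
      using r(1) by (intro sum.cong) (auto simp: cof_eq w_def)
    also have "\<dots> = (\<Sum>i\<in>r ` {..<Suc p}. w i * g i)"
      by (simp only: sum.reindex[OF r(1)] comp_def)
    also have "\<dots> = (\<Sum>i<k. w i * g i)"
      using r(2) by (intro sum.mono_neutral_left) (auto simp: w_def)
    finally show ?thesis .
  qed
  moreover have "w (r p) = det (minor_mat G r c p)"
  proof -
    have "w (r p) = cof p" using r(1) by (simp add: w_def)
    also have "\<dots> = det (minor_mat G (\<lambda>i. r (insert_index p i)) c p)"
      unfolding cof_def cofactor_def mat_delete_minor_mat_last_col by (simp add: mult_2[symmetric])
    also have "\<dots> = det (minor_mat G r c p)"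
      by (rule arg_cong[of _ _ det], rule minor_mat_cong) (simp add: insert_index_def)
    finally show ?thesis .
  qed
  ultimately show ?thesis by blast
qed

definition rows_independent_on :: "nat \<Rightarrow> (nat \<Rightarrow> nat \<Rightarrow> 'a::comm_ring_1) \<Rightarrow> nat set \<Rightarrow> bool" where
  "rows_independent_on k G J \<longleftrightarrow>
     (\<forall>m. (\<forall>j\<in>J. (\<Sum>i<k. m i * G i j) = 0) \<longrightarrow> (\<forall>i<k. m i = 0))"

lemma rows_independent_on_mono:
  "J \<subseteq> J' \<Longrightarrow> rows_independent_on k G J \<Longrightarrow> rows_independent_on k G J'"
  unfolding rows_independent_on_def by blast

lemma rows_independent_iff_on_lessThan:
  "rows_independent k n G \<longleftrightarrow> rows_independent_on k G {..<n}"
  unfolding rows_independent_def rows_independent_on_def by (simp add: Ball_def)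

lemma sum_unit_times:
  fixes G :: "nat \<Rightarrow> nat \<Rightarrow> 'a::comm_ring_1"
  assumes "i < k"
  shows "(\<Sum>i'<k. (if i' = i then 1 else 0) * G i' j) = G i j"
  using assms by (simp add: sum.delta if_distrib[of "\<lambda>x. x * _"] cong: if_cong)

lemma rows_independent_on_imp_row_nonzero:
  fixes G :: "nat \<Rightarrow> nat \<Rightarrow> 'a::comm_ring_1"
  assumes "rows_independent_on k G S" "i < k"
  shows "\<exists>j\<in>S. G i j \<noteq> 0"
proof (rule ccontr)
  assume "\<not> ?thesis"
  then have "\<forall>j\<in>S. (\<Sum>i'<k. (if i' = i then 1 else 0) * G i' j) = 0"
    using sum_unit_times[OF assms(2), of G] by simp
  then have "\<forall>i'<k. (if i' = i then 1 else 0 :: 'a) = 0"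
    using spec[OF assms(1)[unfolded rows_independent_on_def], of "\<lambda>i'. if i' = i then 1 else 0"]
    by simp
  from this[rule_format, OF assms(2)] show False by simp
qed

lemma rows_independent_on_if_det_minor_mat:
  fixes G :: "nat \<Rightarrow> nat \<Rightarrow> 'a::field"
  assumes det: "det (minor_mat G r c k) \<noteq> 0" and r: "bij_betw r {..<k} {..<k}"
  shows "rows_independent_on k G (c ` {..<k})"
  unfolding rows_independent_on_def
proof (intro allI impI)
  fix m i assume m: "\<forall>j\<in>c ` {..<k}. (\<Sum>i<k. m i * G i j) = 0" and i: "i < k"
  define A where "A = transpose_mat (minor_mat G r c k)"
  have A: "A \<in> carrier_mat k k" "det A \<noteq> 0"
    using det det_transpose[OF minor_mat_carrier[of G r c k]] minor_mat_carrier[of G r c k]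
    unfolding A_def by auto
  define v where "v = vec k (\<lambda>a. m (r a))"
  have "A *\<^sub>v v = 0\<^sub>v k"
  proof (rule eq_vecI)
    fix b assume "b < dim_vec (0\<^sub>v k :: 'a vec)"
    then have b: "b < k" by simp
    have "(A *\<^sub>v v) $ b = (\<Sum>a<k. m (r a) * G (r a) (c b))"
      using A(1) b unfolding A_def v_def
      by (auto simp: scalar_prod_def lessThan_atLeast0 mult.commute intro: sum.cong)
    also have "\<dots> = (\<Sum>i<k. m i * G i (c b))"
      using sum.reindex_bij_betw[OF r, of "\<lambda>i. m i * G i (c b)"] by simp
    also have "\<dots> = 0" using m b by blast
    finally show "(A *\<^sub>v v) $ b = 0\<^sub>v k $ b" using b by simp
  qed (use A in simp)
  moreover have "v \<in> carrier_vec k" unfolding v_def by simp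
  ultimately have "v = 0\<^sub>v k"
    using det_0_iff_vec_prod_zero_field[OF A(1)] A(2) by blast
  moreover obtain a where "a < k" "r a = i"
    using r i unfolding bij_betw_def by (metis imageE lessThan_iff)
  ultimately show "m i = 0" unfolding v_def by (metis index_vec index_zero_vec(1))
qed

section \<open>Filling the matrix column by column\<close>

lemma downward_closed_eq_lessThan_card:
  fixes S :: "nat set"
  assumes "finite S" "\<And>x y. x \<in> S \<Longrightarrow> y < x \<Longrightarrow> y \<in> S"
  shows "S = {..<card S}"
proof (cases "S = {}")
  case False
  have "S = {..<Suc (Max S)}"
  proof
    show "S \<subseteq> {..<Suc (Max S)}" using Max_ge[OF assms(1)] by (auto simp: less_Suc_eq_le)
    have "Max S \<in> S" using Max_in[OF assms(1) False] .
    then show "{..<Suc (Max S)} \<subseteq> S"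
      using assms(2)[of "Max S"] by (auto simp: less_Suc_eq)
  qed
  then show ?thesis by (metis card_lessThan)
qed simp

definition rank_below :: "(nat \<Rightarrow> nat) \<Rightarrow> nat \<Rightarrow> nat \<Rightarrow> nat" where
  "rank_below e k t = card {b. b < k \<and> e b < t}"

lemma less_rank_below_iff:
  assumes "strict_mono_on {..<k} e"
  shows "b < rank_below e k t \<longleftrightarrow> b < k \<and> e b < t"
proof -
  define S where "S = {b. b < k \<and> e b < t}"
  have "S = {..<card S}"
  proof (rule downward_closed_eq_lessThan_card)
    show "finite S" unfolding S_def by simp
    show "y \<in> S" if "x \<in> S" "y < x" for x y
      using that strict_mono_onD[OF assms, of y x] unfolding S_def by auto
  qed
  then show ?thesis unfolding rank_below_def S_def[symmetric] by (auto simp: S_def)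
qed

lemma rank_below_at:
  assumes e: "strict_mono_on {..<k} e" and b: "b < k"
  shows "rank_below e k (e b) = b" "rank_below e k (Suc (e b)) = Suc b"
proof -
  have lt: "x < rank_below e k (e b) \<longleftrightarrow> x < b" "x < rank_below e k (Suc (e b)) \<longleftrightarrow> x < Suc b"
    for x
    using less_rank_below_iff[OF e] strict_mono_on_less[OF e, of x b]
      strict_mono_on_less_eq[OF e, of x b] b
    by (auto simp: less_Suc_eq_le)
  show "rank_below e k (e b) = b" "rank_below e k (Suc (e b)) = Suc b"
    using lt[of b] lt[of "Suc b"] lt[of "rank_below e k (e b)"] lt[of "rank_below e k (Suc (e b))"]
    by (metis less_irrefl nat_neq_iff)+
qed

lemma rank_below_Suc_notin:
  assumes "t \<notin> e ` {..<k}"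
  shows "rank_below e k (Suc t) = rank_below e k t"
proof -
  have "{b. b < k \<and> e b < Suc t} = {b. b < k \<and> e b < t}"
    using assms by (auto simp: less_Suc_eq)
  then show ?thesis unfolding rank_below_def by simp
qed

lemma rank_below_0 [simp]: "rank_below e k 0 = 0"
  unfolding rank_below_def by simp

lemma rank_below_bound:
  assumes "e ` {..<k} \<subseteq> {..<n}"
  shows "rank_below e k n = k"
proof -
  have "{b. b < k \<and> e b < n} = {..<k}" using assms by auto
  then show ?thesis unfolding rank_below_def by simp
qed

locale matched_subsets =
  fixes k n :: nat and JJ :: "nat set set"
    and col_nth :: "nat set \<Rightarrow> nat \<Rightarrow> nat" and match :: "nat set \<Rightarrow> nat \<Rightarrow> nat"
    and allowed :: "nat \<Rightarrow> nat \<Rightarrow> bool"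
  assumes finite_JJ: "finite JJ"
    and col_nth_mono: "J \<in> JJ \<Longrightarrow> strict_mono_on {..<k} (col_nth J)"
    and col_nth_image: "J \<in> JJ \<Longrightarrow> col_nth J ` {..<k} = J"
    and JJ_cols: "J \<in> JJ \<Longrightarrow> J \<subseteq> {..<n}"
    and match_bij: "J \<in> JJ \<Longrightarrow> bij_betw (match J) {..<k} {..<k}"
    and match_allowed: "J \<in> JJ \<Longrightarrow> a < k \<Longrightarrow> allowed (match J a) (col_nth J a)"
begin

definition supported :: "(nat \<Rightarrow> nat \<Rightarrow> 'a::zero) \<Rightarrow> bool" where
  "supported G \<longleftrightarrow> (\<forall>i j. \<not> allowed i j \<longrightarrow> G i j = 0)"

definition leading_minor :: "(nat \<Rightarrow> nat \<Rightarrow> 'a) \<Rightarrow> nat set \<Rightarrow> nat \<Rightarrow> 'a mat" where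
  "leading_minor G J t = minor_mat G (match J) (col_nth J) (rank_below (col_nth J) k t)"

definition leading_minors_nonzero :: "nat \<Rightarrow> (nat \<Rightarrow> nat \<Rightarrow> 'a::comm_ring_1) \<Rightarrow> bool" where
  "leading_minors_nonzero t G \<longleftrightarrow> (\<forall>J\<in>JJ. det (leading_minor G J t) \<noteq> 0)"

lemma leading_minor_linear_in_col:
  fixes G :: "nat \<Rightarrow> nat \<Rightarrow> 'a::field"
  assumes J: "J \<in> JJ" "t \<in> J" and G: "leading_minors_nonzero t G"
  shows "\<exists>c. (\<forall>g. det (leading_minor (set_col G t g) J (Suc t)) = (\<Sum>i<k. c i * g i))
            \<and> (\<exists>i\<in>{i. allowed i t}. i < k \<and> c i \<noteq> 0)"
proof -
  note e = col_nth_mono[OF J(1)]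
  have "t \<in> col_nth J ` {..<k}" using col_nth_image[OF J(1)] J(2) by simp
  then obtain p where p: "p < k" "col_nth J p = t" by auto
  have rank: "rank_below (col_nth J) k t = p" "rank_below (col_nth J) k (Suc t) = Suc p"
    using rank_below_at[OF e p(1)] p(2) by simp_all
  have sub: "{..<Suc p} \<subseteq> {..<k}" using p(1) by auto
  have r: "inj_on (match J) {..<Suc p}" "match J ` {..<Suc p} \<subseteq> {..<k}"
    using inj_on_subset[OF bij_betw_imp_inj_on[OF match_bij[OF J(1)]] sub]
      image_mono[OF sub, of "match J"] bij_betw_imp_surj_on[OF match_bij[OF J(1)]]
    by simp_all
  have "col_nth J b \<noteq> t" if "b < p" for b
    using strict_mono_onD[OF e, of b p] that p by auto
  with det_minor_mat_set_col_linear[of "match J" p k "col_nth J" t G, OF r p(2)] obtain c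
    where c: "\<forall>g. det (minor_mat (set_col G t g) (match J) (col_nth J) (Suc p)) = (\<Sum>i<k. c i * g i)"
      "c (match J p) = det (minor_mat G (match J) (col_nth J) p)"
    by blast
  have "c (match J p) \<noteq> 0"
    using G J(1) rank(1) c(2) unfolding leading_minors_nonzero_def leading_minor_def by metis
  moreover have "match J p \<in> {i. allowed i t}" "match J p < k"
    using match_allowed[OF J(1) p(1)] p(2) bij_betw_apply[OF match_bij[OF J(1)]] p(1) by simp_all
  ultimately show ?thesis unfolding leading_minor_def rank(2) using c(1) by blast
qed

lemma leading_minor_set_col_notin:
  assumes J: "J \<in> JJ" "t \<notin> J"
  shows "leading_minor (set_col G t g) J (Suc t) = leading_minor G J t"
proof -
  have rank: "rank_below (col_nth J) k (Suc t) = rank_below (col_nth J) k t"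
    using rank_below_Suc_notin col_nth_image[OF J(1)] J(2) by metis
  have "col_nth J b \<noteq> t" if "b < rank_below (col_nth J) k t" for b
    using that less_rank_below_iff[OF col_nth_mono[OF J(1)]] col_nth_image[OF J(1)] J(2) by auto
  then show ?thesis unfolding leading_minor_def rank by (rule minor_mat_set_col_other)
qed

lemma leading_minors_nonzero_Suc:
  fixes G :: "nat \<Rightarrow> nat \<Rightarrow> 'a::{finite,field}"
  assumes G: "supported G" "leading_minors_nonzero t G"
    and card: "card {J\<in>JJ. t \<in> J} < card (UNIV :: 'a set)"
  shows "\<exists>g. supported (set_col G t g) \<and> leading_minors_nonzero (Suc t) (set_col G t g)"
proof -
  define form where "form J g = det (leading_minor (set_col G t g) J (Suc t))" for J g
  have "finite (form ` {J\<in>JJ. t \<in> J})" using finite_JJ by simp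
  moreover have "card (form ` {J\<in>JJ. t \<in> J}) < card (UNIV :: 'a set)"
    using card_image_le[of "{J\<in>JJ. t \<in> J}" form] finite_JJ card by simp
  moreover have "\<forall>f\<in>form ` {J\<in>JJ. t \<in> J}. \<exists>c. (\<forall>g. f g = (\<Sum>i<k. c i * g i))
                    \<and> (\<exists>i\<in>{i. allowed i t}. i < k \<and> c i \<noteq> 0)"
  proof
    fix f assume "f \<in> form ` {J\<in>JJ. t \<in> J}"
    then obtain J where J: "J \<in> JJ" "t \<in> J" "f = form J" by blast
    show "\<exists>c. (\<forall>g. f g = (\<Sum>i<k. c i * g i)) \<and> (\<exists>i\<in>{i. allowed i t}. i < k \<and> c i \<noteq> 0)"
      using leading_minor_linear_in_col[OF J(1,2) G(2)] unfolding J(3) form_def .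
  qed
  ultimately have "\<exists>g. (\<forall>i. i \<notin> {i. allowed i t} \<longrightarrow> g i = 0) \<and> (\<forall>f\<in>form ` {J\<in>JJ. t \<in> J}. f g \<noteq> 0)"
    by (rule exists_vector_avoiding_linear_forms)
  then obtain g where g: "\<forall>i. \<not> allowed i t \<longrightarrow> g i = 0" "\<forall>J\<in>JJ. t \<in> J \<longrightarrow> form J g \<noteq> 0"
    by auto
  have "supported (set_col G t g)"
    using G(1) g(1) unfolding supported_def set_col_def by simp
  moreover have "det (leading_minor (set_col G t g) J (Suc t)) \<noteq> 0"
    if J: "J \<in> JJ" for J
    using g(2) G(2) J leading_minor_set_col_notin[OF J, of t G g]
    unfolding form_def leading_minors_nonzero_def by (cases "t \<in> J") auto
  ultimately show ?thesis unfolding leading_minors_nonzero_def by blast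
qed

lemma exists_supported_minors_nonzero:
  assumes "\<And>t. t < n \<Longrightarrow> card {J\<in>JJ. t \<in> J} < card (UNIV :: 'a::{finite,field} set)"
  shows "\<exists>G :: nat \<Rightarrow> nat \<Rightarrow> 'a. supported G \<and> (\<forall>J\<in>JJ. det (minor_mat G (match J) (col_nth J) k) \<noteq> 0)"
proof -
  have "\<exists>G :: nat \<Rightarrow> nat \<Rightarrow> 'a. supported G \<and> leading_minors_nonzero t G" if "t \<le> n" for t
    using that
  proof (induction t)
    case 0
    have "det (minor_mat (\<lambda>_ _. 0 :: 'a) r c 0) = 1" for r c
      unfolding minor_mat_def by (simp add: det_def)
    then show ?case unfolding supported_def leading_minors_nonzero_def leading_minor_def by auto
  next
    case (Suc t)
    then obtain G :: "nat \<Rightarrow> nat \<Rightarrow> 'a" where G: "supported G" "leading_minors_nonzero t G"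
      by auto
    show ?case using leading_minors_nonzero_Suc[OF G assms] Suc.prems by auto
  qed
  from this[OF order_refl] obtain G :: "nat \<Rightarrow> nat \<Rightarrow> 'a"
    where G: "supported G" "leading_minors_nonzero n G"
    by blast
  have "rank_below (col_nth J) k n = k" if "J \<in> JJ" for J
    using rank_below_bound col_nth_image[OF that] JJ_cols[OF that] by metis
  with G show ?thesis unfolding leading_minors_nonzero_def leading_minor_def by auto
qed

end

section \<open>Cyclic zero windows\<close>

lemma div_le_iff_less_Suc_mult: "0 < (q::nat) \<Longrightarrow> x div q \<le> m \<longleftrightarrow> x < Suc m * q"
  using div_less_iff_less_mult[of q x "Suc m"] by linarith

definition window_start :: "nat \<Rightarrow> nat \<Rightarrow> nat \<Rightarrow> nat" where
  "window_start n k i = i * n div k"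

text \<open>Row i is to vanish exactly on the k - 1 cyclically consecutive columns starting at
  window_start n k i; the second disjunct covers the windows that wrap around past column n - 1.\<close>

definition in_zero_window :: "nat \<Rightarrow> nat \<Rightarrow> nat \<Rightarrow> nat \<Rightarrow> bool" where
  "in_zero_window n k i j \<longleftrightarrow>
     (window_start n k i \<le> j \<and> j < window_start n k i + (k - 1)) \<or>
     (window_start n k i \<le> j + n \<and> j + n < window_start n k i + (k - 1))"

lemma window_start_less:
  assumes "i < k" "k \<le> n"
  shows "window_start n k i < n"
  using assms div_less_iff_less_mult[of k "i * n" n] unfolding window_start_def by simp

lemma window_start_add:
  assumes "0 < k"
  shows "window_start n k (i + k) = window_start n k i + n"
proof -
  have "(i + k) * n = i * n + n * k" by (simp add: algebra_simps)
  then show ?thesis unfolding window_start_def using assms by simp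
qed

lemma window_start_Suc:
  assumes "k \<le> n" "0 < k"
  shows "window_start n k i + 1 \<le> window_start n k (Suc i)"
proof -
  have "(i * n + k) div k = i * n div k + 1" using assms(2) div_add_self2[of k "i * n"] by simp
  moreover have "(i * n + k) div k \<le> (i * n + n) div k" using assms(1) by (simp add: div_le_mono)
  ultimately show ?thesis unfolding window_start_def by (simp add: algebra_simps)
qed

lemma window_start_gap:
  assumes "k \<le> n" "0 < k" "i \<le> i'"
  shows "window_start n k i + (i' - i) \<le> window_start n k i'"
  using assms(3)
proof (induction i' rule: dec_induct)
  case (step m)
  then show ?case using window_start_Suc[OF assms(1,2), of m] by (simp add: Suc_diff_le)
qed simp

lemma window_start_wrap_gap:
  assumes "k \<le> n" "i' < i" "i < k"
  shows "window_start n k i + k + i' \<le> window_start n k i' + n + i"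
proof -
  define d where "d = i - i'"
  have "d * n = d * (n - k) + d * k" "k * (n - k + d) = k * (n - k) + d * k"
    using assms(1) by (simp_all add: algebra_simps)
  moreover have "d * (n - k) \<le> k * (n - k)"
    using assms unfolding d_def by (intro mult_le_mono1) linarith
  ultimately have "i * n \<le> i' * n + k * (n - k + d)"
    using assms(2) unfolding d_def by (simp add: algebra_simps)
  then have "i * n div k \<le> (i' * n + k * (n - k + d)) div k" by (rule div_le_mono)
  also have "\<dots> = i' * n div k + (n - k + d)" using assms by simp
  finally show ?thesis using assms unfolding window_start_def d_def by linarith
qed

lemma card_zero_window_row:
  assumes "i < k" "k \<le> n"
  shows "card {j. j < n \<and> in_zero_window n k i j} = k - 1"
proof -
  define s where "s = window_start n k i"
  have sn: "s < n" unfolding s_def using window_start_less[OF assms(1,2)] .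
  have eq: "{j. j < n \<and> in_zero_window n k i j} = {s ..< min n (s + (k - 1))} \<union> {..< s + (k - 1) - n}"
    unfolding in_zero_window_def s_def[symmetric] using sn assms by auto
  have le: "s + (k - 1) - n \<le> s" using assms by arith
  have disj: "{s ..< min n (s + (k - 1))} \<inter> {..< s + (k - 1) - n} = {}"
  proof (rule equals0I)
    fix x assume "x \<in> {s ..< min n (s + (k - 1))} \<inter> {..< s + (k - 1) - n}"
    then have "s \<le> x" "x < s + (k - 1) - n" by auto
    then show False using le by linarith
  qed
  have "card {j. j < n \<and> in_zero_window n k i j}
      = card {s ..< min n (s + (k - 1))} + card {..< s + (k - 1) - n}"
    unfolding eq using card_Un_disjoint[OF _ _ disj] by simp
  also have "\<dots> = k - 1" using sn by (cases "s + (k - 1) \<le> n") auto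
  finally show ?thesis .
qed

lemma card_multiples_in_interval:
  assumes "0 < (n::nat)"
  shows "c div n \<le> card {u. L \<le> u * n \<and> u * n < L + c}
    \<and> card {u. L \<le> u * n \<and> u * n < L + c} \<le> c div n + 1"
proof -
  define a where "a = L + n - 1"
  have set_eq: "{u. L \<le> u * n \<and> u * n < L + c} = {a div n ..< (a + c) div n}"
  proof -
    \<comment> \<open>a div n is the ceiling of L / n\<close>
    have 1: "L \<le> u * n \<longleftrightarrow> a div n \<le> u" for u
      using div_less_iff_less_mult[OF assms, of a "Suc u"] assms unfolding a_def by auto
    have 2: "u * n < L + c \<longleftrightarrow> u < (a + c) div n" for u
      using less_eq_div_iff_mult_less_eq[OF assms, of "Suc u" "a + c"] assms unfolding a_def by auto
    show ?thesis using 1 2 by auto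
  qed
  have "(a + c) div n = a div n + c div n + (a mod n + c mod n) div n" by (rule div_add1_eq)
  moreover have "(a mod n + c mod n) div n \<le> 1"
  proof -
    have "a mod n < n" "c mod n < n" using assms by simp_all
    then have "a mod n + c mod n < 2 * n" by linarith
    then show ?thesis using div_less_iff_less_mult[OF assms, of "a mod n + c mod n" 2] by simp
  qed
  ultimately show ?thesis unfolding set_eq by simp
qed

lemma window_start_contains_iff:
  assumes "0 < k"
  shows "window_start n k u \<le> x \<and> x < window_start n k u + (k - 1)
    \<longleftrightarrow> (x + 2 - k) * k \<le> u * n \<and> u * n < Suc x * k"
proof -
  have shift: "x < w + (k - 1) \<longleftrightarrow> x + 2 - k \<le> w" for w using assms by arith
  have "window_start n k u \<le> x \<longleftrightarrow> u * n < Suc x * k"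
    unfolding window_start_def using div_le_iff_less_Suc_mult[OF assms] .
  moreover have "x < window_start n k u + (k - 1) \<longleftrightarrow> (x + 2 - k) * k \<le> u * n"
    unfolding window_start_def shift using less_eq_div_iff_mult_less_eq[OF assms] .
  ultimately show ?thesis by blast
qed

text \<open>Adding k to the index of a row whose window wraps around turns the rows whose window
  contains column j into the indices u whose unwrapped window contains j + n.\<close>

lemma card_zero_window_col_eq:
  assumes "j < n" "0 < k" "k \<le> n"
  shows "card {i. i < k \<and> in_zero_window n k i j}
    = card {u. window_start n k u \<le> j + n \<and> j + n < window_start n k u + (k - 1)}"
proof -
  define U where "U = {u. window_start n k u \<le> j + n \<and> j + n < window_start n k u + (k - 1)}"
  define phi where "phi i = (if window_start n k i \<le> j then i + k else i)" for i
  have shift: "window_start n k (i + k) = window_start n k i + n" for i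
    using window_start_add[OF assms(2)] .
  have "bij_betw phi {i. i < k \<and> in_zero_window n k i j} U"
  proof (rule bij_betw_imageI)
    show "inj_on phi {i. i < k \<and> in_zero_window n k i j}"
      unfolding inj_on_def phi_def by auto
    show "phi ` {i. i < k \<and> in_zero_window n k i j} = U"
    proof (intro equalityI subsetI)
      fix u assume "u \<in> phi ` {i. i < k \<and> in_zero_window n k i j}"
      then obtain i where "in_zero_window n k i j" "u = phi i" by blast
      then show "u \<in> U"
        using shift[of i] assms(3) unfolding U_def phi_def in_zero_window_def by (auto split: if_splits)
    next
      fix u assume "u \<in> U"
      then have u: "window_start n k u \<le> j + n" "j + n < window_start n k u + (k - 1)"
        unfolding U_def by auto
      have "u < 2 * k"
      proof (rule ccontr)
        assume "\<not> u < 2 * k"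
        then have "2 * n \<le> window_start n k u"
          unfolding window_start_def using less_eq_div_iff_mult_less_eq[OF assms(2), of "2 * n" "u * n"]
          by (simp add: mult.commute)
        then show False using u(1) assms(1) by linarith
      qed
      show "u \<in> phi ` {i. i < k \<and> in_zero_window n k i j}"
      proof (cases "k \<le> u")
        case True
        then have "u - k < k" "window_start n k u = window_start n k (u - k) + n"
          using \<open>u < 2 * k\<close> shift[of "u - k"] by auto
        then show ?thesis using u True
          by (intro image_eqI[of u phi "u - k"]) (auto simp: phi_def in_zero_window_def)
      next
        case False
        then show ?thesis using u assms(3)
          by (intro image_eqI[of u phi u]) (auto simp: phi_def in_zero_window_def)
      qed
    qed
  qed
  then show ?thesis unfolding U_def by (rule bij_betw_same_card)
qed

lemma card_zero_window_col_bounds: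
  assumes "j < n" "1 \<le> k" "k \<le> n"
  shows "(k - 1) * k div n \<le> card {i. i < k \<and> in_zero_window n k i j}"
    and "card {i. i < k \<and> in_zero_window n k i j} \<le> (k - 1) * k div n + 1"
proof -
  have "Suc (j + n) * k = (j + n + 2 - k) * k + (k - 1) * k"
    using assms by (simp add: add_mult_distrib[symmetric])
  then have "card {i. i < k \<and> in_zero_window n k i j}
      = card {u. (j + n + 2 - k) * k \<le> u * n \<and> u * n < (j + n + 2 - k) * k + (k - 1) * k}"
    using assms(2) card_zero_window_col_eq[OF assms(1) _ assms(3)]
      window_start_contains_iff[of k n _ "j + n"]
    by simp
  then show "(k - 1) * k div n \<le> card {i. i < k \<and> in_zero_window n k i j}"
    and "card {i. i < k \<and> in_zero_window n k i j} \<le> (k - 1) * k div n + 1"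
    using card_multiples_in_interval[of n "(k - 1) * k" "(j + n + 2 - k) * k"] assms by auto
qed

section \<open>Matching rows to columns outside the windows\<close>

lemma bij_betw_add_mod:
  assumes "0 < (k::nat)"
  shows "bij_betw (\<lambda>i. (i + c) mod k) {..<k} {..<k}"
proof -
  have "a \<in> (\<lambda>i. (i + c) mod k) ` {..<k}" if "a < k" for a
  proof
    have "((a + (k - c mod k)) mod k + c) mod k = (a + (k - c mod k) + c mod k) mod k"
      by (simp add: mod_add_left_eq mod_add_right_eq)
    also have "\<dots> = (a + k) mod k"
      using mod_less_divisor[OF assms, of c] by (simp add: less_imp_le)
    also have "\<dots> = a" using that by simp
    finally show "a = ((a + (k - c mod k)) mod k + c) mod k" by simp
  qed (use assms in simp)
  then have "(\<lambda>i. (i + c) mod k) ` {..<k} = {..<k}" using assms by auto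
  then show ?thesis by (simp add: bij_betw_def eq_card_imp_inj_on)
qed

text \<open>The periodic extension lists the columns e 0 < ... < e (k - 1), repeated with period n,
  in increasing order; count_below x is the number of its terms below x.\<close>

definition periodic_ext :: "(nat \<Rightarrow> nat) \<Rightarrow> nat \<Rightarrow> nat \<Rightarrow> nat \<Rightarrow> nat" where
  "periodic_ext e n k u = e (u mod k) + n * (u div k)"

definition count_below :: "(nat \<Rightarrow> nat) \<Rightarrow> nat \<Rightarrow> nat \<Rightarrow> nat \<Rightarrow> nat" where
  "count_below e n k x = card {u. periodic_ext e n k u < x}"

locale column_enum =
  fixes e :: "nat \<Rightarrow> nat" and n k :: nat
  assumes k_pos: "0 < k" and k_le_n: "k \<le> n"
    and e_mono: "strict_mono_on {..<k} e" and e_less: "\<And>a. a < k \<Longrightarrow> e a < n"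
begin

lemma periodic_ext_less_Suc: "periodic_ext e n k u < periodic_ext e n k (Suc u)"
proof (cases "Suc (u mod k) = k")
  case True
  then have "Suc u mod k = 0" "Suc u div k = Suc (u div k)"
    using mod_Suc[of u k] div_Suc[of u k] by simp_all
  then show ?thesis using e_less[of "u mod k"] k_pos unfolding periodic_ext_def by (simp; linarith)
next
  case False
  then have m: "Suc u mod k = Suc (u mod k)" "Suc u div k = u div k"
    using mod_Suc[of u k] div_Suc[of u k] by simp_all
  have "Suc (u mod k) < k" using False k_pos by (metis Suc_lessI mod_less_divisor)
  then have "e (u mod k) < e (Suc (u mod k))"
    using strict_mono_onD[OF e_mono, of "u mod k" "Suc (u mod k)"] by simp
  then show ?thesis unfolding periodic_ext_def m by simp
qed

lemma periodic_ext_less: "u < v \<Longrightarrow> periodic_ext e n k u < periodic_ext e n k v"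
  using lift_Suc_mono_less[of "periodic_ext e n k", OF periodic_ext_less_Suc] by blast

lemma periodic_ext_ge: "u \<le> periodic_ext e n k u"
  by (induction u) (use periodic_ext_less_Suc in \<open>auto simp: Suc_le_eq intro: le_less_trans\<close>)

lemma periodic_ext_add: "periodic_ext e n k (u + k) = periodic_ext e n k u + n"
  unfolding periodic_ext_def using k_pos by simp

lemma periodic_ext_eq: "u < k \<Longrightarrow> periodic_ext e n k u = e u"
  unfolding periodic_ext_def by simp

lemma less_count_below_iff: "u < count_below e n k x \<longleftrightarrow> periodic_ext e n k u < x"
proof -
  define S where "S = {u. periodic_ext e n k u < x}"
  have "S = {..<card S}"
  proof (rule downward_closed_eq_lessThan_card)
    have "u < x" if "u \<in> S" for u
      using that periodic_ext_ge[of u] unfolding S_def by simp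
    then show "finite S" by (meson finite_lessThan lessThan_iff subsetI finite_subset)
    show "y \<in> S" if "z \<in> S" "y < z" for y z
      using periodic_ext_less[OF that(2)] that(1) unfolding S_def by simp
  qed
  then show ?thesis unfolding count_below_def S_def[symmetric] by (auto simp: S_def)
qed

lemma count_below_add: "count_below e n k (x + n) = count_below e n k x + k"
proof -
  have "b < count_below e n k (x + n) \<longleftrightarrow> b < count_below e n k x + k" for b
  proof (cases "b < k")
    case True
    then show ?thesis using e_less[OF True] periodic_ext_eq[OF True] less_count_below_iff by simp
  next
    case False
    define b' where "b' = b - k"
    have b: "b = b' + k" using False unfolding b'_def by simp
    show ?thesis unfolding b less_count_below_iff periodic_ext_add by (simp add: less_count_below_iff)
  qed
  then have "{..<count_below e n k (x + n)} = {..<count_below e n k x + k}"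
    unfolding set_eq_iff lessThan_iff by blast
  then show ?thesis by simp
qed

lemma count_below_mono:
  assumes "x \<le> y"
  shows "count_below e n k x \<le> count_below e n k y"
proof -
  have "u < count_below e n k y" if "u < count_below e n k x" for u
    using that assms by (simp add: less_count_below_iff)
  then show ?thesis by (metis leI less_irrefl)
qed

lemma count_below_diff:
  assumes "x \<le> y"
  shows "count_below e n k y + x \<le> count_below e n k x + y"
proof -
  have "card {count_below e n k x ..< count_below e n k y} \<le> card {x ..< y}"
  proof (rule card_inj_on_le)
    show "inj_on (periodic_ext e n k) {count_below e n k x ..< count_below e n k y}"
      unfolding inj_on_def by (metis periodic_ext_less less_irrefl nat_neq_iff)
    show "periodic_ext e n k ` {count_below e n k x ..< count_below e n k y} \<subseteq> {x ..< y}"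
    proof
      fix v assume "v \<in> periodic_ext e n k ` {count_below e n k x ..< count_below e n k y}"
      then obtain u where u: "count_below e n k x \<le> u" "u < count_below e n k y" "v = periodic_ext e n k u"
        by auto
      have "\<not> periodic_ext e n k u < x" using u(1) less_count_below_iff[of u x] by simp
      moreover have "periodic_ext e n k u < y" using u(2) less_count_below_iff by simp
      ultimately show "v \<in> {x ..< y}" using u(3) by simp
    qed
  qed simp
  then have "count_below e n k y - count_below e n k x \<le> y - x" by simp
  moreover have "count_below e n k x \<le> count_below e n k y" using count_below_mono[OF assms] .
  ultimately show ?thesis using assms by linarith
qed

lemma window_bounds_compatible_le:
  assumes "i \<le> i'" "i' < k"
  shows "count_below e n k (window_start n k i + (k - 1)) + i' + 1
    \<le> count_below e n k (window_start n k i') + k + i"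
proof -
  define si where "si = window_start n k i"
  define si' where "si' = window_start n k i'"
  define Q where "Q = count_below e n k (si + (k - 1))"
  define P where "P = count_below e n k si'"
  have gap: "si + (i' - i) \<le> si'"
    unfolding si_def si'_def using window_start_gap[OF k_le_n k_pos assms(1)] .
  have "Q + i' + 1 \<le> P + k + i"
  proof (cases "si + (k - 1) \<le> si'")
    case True
    then have "Q \<le> P" unfolding Q_def P_def by (rule count_below_mono)
    then show ?thesis using assms by linarith
  next
    case False
    then have "Q + si' \<le> P + (si + (k - 1))"
      unfolding Q_def P_def by (intro count_below_diff) linarith
    then show ?thesis using gap assms k_pos by linarith
  qed
  then show ?thesis unfolding Q_def P_def si_def si'_def .
qed

lemma window_bounds_compatible_wrap:
  assumes "i' < i" "i < k"
  shows "count_below e n k (window_start n k i + (k - 1)) + i' + 1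
    \<le> count_below e n k (window_start n k i') + k + i"
proof -
  define si where "si = window_start n k i"
  define si' where "si' = window_start n k i'"
  define Q where "Q = count_below e n k (si + (k - 1))"
  define P where "P = count_below e n k si'"
  have "Q + i' + 1 \<le> P + k + i"
  proof (cases "si + (k - 1) \<le> si' + n")
    case True
    then have "Q \<le> count_below e n k (si' + n)" unfolding Q_def by (rule count_below_mono)
    then show ?thesis using assms unfolding P_def count_below_add by linarith
  next
    case False
    then have "Q + (si' + n) \<le> count_below e n k (si' + n) + (si + (k - 1))"
      unfolding Q_def by (intro count_below_diff) linarith
    moreover have "si + k + i' \<le> si' + n + i"
      unfolding si_def si'_def using window_start_wrap_gap[OF k_le_n assms] .
    ultimately show ?thesis using k_pos unfolding P_def count_below_add by linarith
  qed
  then show ?thesis unfolding Q_def P_def si_def si'_def .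
qed

lemma window_bounds_compatible:
  assumes "i < k" "i' < k"
  shows "count_below e n k (window_start n k i + (k - 1)) + i' + 1
    \<le> count_below e n k (window_start n k i') + k + i"
  using window_bounds_compatible_le[OF _ assms(2)] window_bounds_compatible_wrap[OF _ assms(1)]
  by (cases "i \<le> i'") simp_all

text \<open>Row i is matched with the term of index i + c of the periodic extension. Each row admits
  an interval of shifts c, and window_bounds_compatible says that these intervals pairwise
  intersect, so (being intervals) they have a common point.\<close>

lemma exists_shift_off_windows:
  "\<exists>c. \<forall>i<k. count_below e n k (window_start n k i + (k - 1)) \<le> i + c
              \<and> i + c < count_below e n k (window_start n k i) + k"
proof -
  define Q where "Q i = count_below e n k (window_start n k i + (k - 1))" for i
  define c where "c = Max ((\<lambda>i. Q i - i) ` {..<k})"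
  have "c \<in> (\<lambda>i. Q i - i) ` {..<k}" unfolding c_def using k_pos by (intro Max_in) auto
  then obtain i0 where i0: "i0 < k" "c = Q i0 - i0" by auto
  have "Q i \<le> i + c \<and> i + c < count_below e n k (window_start n k i) + k" if i: "i < k" for i
  proof
    have "Q i - i \<le> c" unfolding c_def using i by (intro Max_ge) auto
    then show "Q i \<le> i + c" by arith
    show "i + c < count_below e n k (window_start n k i) + k"
      using window_bounds_compatible[OF i0(1) i] i0(2) i unfolding Q_def by arith
  qed
  then show ?thesis unfolding Q_def by blast
qed

lemma not_in_zero_window_periodic_ext:
  assumes i: "i < k"
    and lower: "count_below e n k (window_start n k i + (k - 1)) \<le> u"
    and upper: "u < count_below e n k (window_start n k i) + k"
  shows "\<not> in_zero_window n k i (e (u mod k))"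
proof -
  define s where "s = window_start n k i"
  define j where "j = e (u mod k)"
  have pe: "periodic_ext e n k u = j + n * (u div k)" unfolding periodic_ext_def j_def ..
  have "s < n" unfolding s_def using window_start_less[OF i k_le_n] .
  have "\<not> u < count_below e n k (s + (k - 1))" using lower unfolding s_def by simp
  then have lo: "s + (k - 1) \<le> j + n * (u div k)" unfolding less_count_below_iff pe by simp
  have hi: "j + n * (u div k) < s + n"
    using upper less_count_below_iff[of u] unfolding s_def pe count_below_add[symmetric] by simp
  with \<open>s < n\<close> have "n * (u div k) < n * 2" by linarith
  then have "u div k < 2" by simp
  then consider "u div k = 0" | "u div k = 1" by linarith
  then show ?thesis
    by cases (use lo hi in \<open>auto simp: in_zero_window_def s_def[symmetric] j_def[symmetric]\<close>)
qed

lemma exists_matching_off_windows: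
  "\<exists>\<rho>. bij_betw \<rho> {..<k} {..<k} \<and> (\<forall>a<k. \<not> in_zero_window n k (\<rho> a) (e a))"
proof -
  obtain c where c: "\<forall>i<k. count_below e n k (window_start n k i + (k - 1)) \<le> i + c
                        \<and> i + c < count_below e n k (window_start n k i) + k"
    using exists_shift_off_windows by blast
  define col where "col i = (i + c) mod k" for i
  have col: "bij_betw col {..<k} {..<k}"
    unfolding col_def using bij_betw_add_mod[OF k_pos] .
  have "\<not> in_zero_window n k (inv_into {..<k} col a) (e a)" if "a < k" for a
  proof -
    define i where "i = inv_into {..<k} col a"
    have "i < k" "col i = a"
      using bij_betw_inv_into_right[OF col] bij_betw_apply[OF bij_betw_inv_into[OF col]] that
      unfolding i_def by auto
    then show ?thesis
      using not_in_zero_window_periodic_ext[of i "i + c"] c unfolding i_def col_def by auto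
  qed
  then show ?thesis using bij_betw_inv_into[OF col] by blast
qed

end

section \<open>MDS codes from independent columns\<close>

definition codeword :: "nat \<Rightarrow> nat \<Rightarrow> (nat \<Rightarrow> nat \<Rightarrow> 'a::comm_ring_1) \<Rightarrow> (nat \<Rightarrow> 'a) \<Rightarrow> nat \<Rightarrow> 'a" where
  "codeword k n G m = (\<lambda>j. if j < n then (\<Sum>i<k. m i * G i j) else 0)"

lemma row_space_eq_range_codeword: "row_space k n G = range (codeword k n G)"
  unfolding row_space_def codeword_def by auto

lemma hamming_dist_codeword_ge:
  fixes G :: "nat \<Rightarrow> nat \<Rightarrow> 'a::comm_ring_1"
  assumes "k \<le> n"
    and indep: "\<And>J. J \<subseteq> {..<n} \<Longrightarrow> card J = k \<Longrightarrow> rows_independent_on k G J"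
    and ne: "codeword k n G m1 \<noteq> codeword k n G m2"
  shows "n - k + 1 \<le> hamming_dist n (codeword k n G m1) (codeword k n G m2)"
proof (rule ccontr)
  define E where "E = {j. j < n \<and> codeword k n G m1 j = codeword k n G m2 j}"
  assume "\<not> ?thesis"
  moreover have "card E + hamming_dist n (codeword k n G m1) (codeword k n G m2)
      = card (E \<union> {j. j < n \<and> codeword k n G m1 j \<noteq> codeword k n G m2 j})"
    unfolding E_def hamming_dist_def by (rule card_Un_disjoint[symmetric]) auto
  moreover have "E \<union> {j. j < n \<and> codeword k n G m1 j \<noteq> codeword k n G m2 j} = {..<n}"
    unfolding E_def by auto
  ultimately have "k \<le> card E" using assms(1) by simp
  then obtain J where J: "J \<subseteq> E" "card J = k" by (meson obtain_subset_with_card_n)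
  then have "J \<subseteq> {..<n}" unfolding E_def by auto
  moreover have "\<forall>j\<in>J. (\<Sum>i<k. (m1 i - m2 i) * G i j) = 0"
    using J(1) unfolding E_def codeword_def by (auto simp: left_diff_distrib sum_subtractf)
  ultimately have "\<forall>i<k. m1 i - m2 i = 0"
    using spec[OF indep[of J, unfolded rows_independent_on_def], of "\<lambda>i. m1 i - m2 i"] J(2) by simp
  then have sums: "(\<Sum>i<k. m1 i * G i j) = (\<Sum>i<k. m2 i * G i j)" for j
    by (intro sum.cong) simp_all
  have "codeword k n G m1 = codeword k n G m2" unfolding codeword_def sums by (rule refl)
  with ne show False by simp
qed

lemma finite_hamming_dist_set: "finite {hamming_dist n u v |u v. P u v}"
proof -
  have "hamming_dist n u v \<le> n" for u v :: "nat \<Rightarrow> 'a"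
    unfolding hamming_dist_def by (rule card_mono[of "{..<n}", simplified]) auto
  then have "{hamming_dist n u v |u v. P u v} \<subseteq> {..n}"
    unfolding atMost_def by blast
  then show ?thesis using finite_subset by blast
qed

lemma hamming_dist_unit_codeword:
  assumes "i < k"
  shows "hamming_dist n (codeword k n G (\<lambda>i'. if i' = i then 1 else 0)) (codeword k n G (\<lambda>_. 0))
    = row_weight n G i"
proof -
  have "{j. j < n \<and> codeword k n G (\<lambda>i'. if i' = i then 1 else 0) j \<noteq> codeword k n G (\<lambda>_. 0) j}
      = {j. j < n \<and> G i j \<noteq> 0}"
    unfolding codeword_def using sum_unit_times[OF assms, of G] by auto
  then show ?thesis unfolding hamming_dist_def row_weight_def hamming_weight_def by simp
qed

lemma min_distance_row_space:
  fixes G :: "nat \<Rightarrow> nat \<Rightarrow> 'a::comm_ring_1"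
  assumes "k \<le> n" and i0: "i0 < k" "row_weight n G i0 = n - k + 1"
    and indep: "\<And>J. J \<subseteq> {..<n} \<Longrightarrow> card J = k \<Longrightarrow> rows_independent_on k G J"
  shows "min_distance n (row_space k n G) = n - k + 1"
  unfolding min_distance_def row_space_eq_range_codeword
proof (rule Min_eqI[OF finite_hamming_dist_set])
  show "n - k + 1 \<le> y"
    if "y \<in> {hamming_dist n u v |u v. u \<in> range (codeword k n G) \<and> v \<in> range (codeword k n G) \<and> u \<noteq> v}"
    for y
    using that hamming_dist_codeword_ge[OF assms(1) indep] by blast
  define u where "u = codeword k n G (\<lambda>i. if i = i0 then 1 else 0)"
  define z where "z = codeword k n G (\<lambda>_. 0)"
  have "hamming_dist n u z = n - k + 1"
    unfolding u_def z_def hamming_dist_unit_codeword[OF i0(1)] by (rule i0(2))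
  moreover then have "u \<noteq> z" unfolding hamming_dist_def by auto
  ultimately show "n - k + 1
      \<in> {hamming_dist n u v |u v. u \<in> range (codeword k n G) \<and> v \<in> range (codeword k n G) \<and> u \<noteq> v}"
    unfolding mem_Collect_eq by (intro exI[of _ u] exI[of _ z]) (simp add: u_def z_def)
qed

lemma generates_MDS_if_rows_independent_on_subsets:
  fixes G :: "nat \<Rightarrow> nat \<Rightarrow> 'a::field"
  assumes "k \<le> n" "i0 < k" "row_weight n G i0 = n - k + 1"
    and indep: "\<And>J. J \<subseteq> {..<n} \<Longrightarrow> card J = k \<Longrightarrow> rows_independent_on k G J"
  shows "generates_MDS k n G"
proof -
  have "rows_independent k n G"
    unfolding rows_independent_iff_on_lessThan
    using indep[of "{..<k}"] rows_independent_on_mono[of "{..<k}" "{..<n}"] assms(1) by simp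
  then show ?thesis
    unfolding generates_MDS_def using min_distance_row_space[OF assms] by blast
qed

lemma hamming_weight_add_card_zeros:
  "hamming_weight n v + card {j. j < n \<and> v j = 0} = n"
proof -
  have "card {j. j < n \<and> v j \<noteq> 0} + card {j. j < n \<and> v j = 0}
      = card ({j. j < n \<and> v j \<noteq> 0} \<union> {j. j < n \<and> v j = 0})"
    by (rule card_Un_disjoint[symmetric]) auto
  also have "{j. j < n \<and> v j \<noteq> 0} \<union> {j. j < n \<and> v j = 0} = {..<n}" by auto
  finally show ?thesis unfolding hamming_weight_def by simp
qed

lemma row_weight_zero_window:
  assumes "i < k" "1 \<le> k" "k \<le> n" "\<forall>j<n. G i j = 0 \<longleftrightarrow> in_zero_window n k i j"
  shows "row_weight n G i = n - k + 1"
proof -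
  have "{j. j < n \<and> G i j = 0} = {j. j < n \<and> in_zero_window n k i j}" using assms(4) by auto
  then show ?thesis
    using hamming_weight_add_card_zeros[of n "G i"] card_zero_window_row[OF assms(1,3)] assms(2,3)
    unfolding row_weight_def by simp
qed

lemma col_weight_add_card_zero_window:
  assumes "\<forall>i<k. G i j = 0 \<longleftrightarrow> in_zero_window n k i j"
  shows "col_weight k G j + card {i. i < k \<and> in_zero_window n k i j} = k"
proof -
  have "{i. i < k \<and> G i j = 0} = {i. i < k \<and> in_zero_window n k i j}" using assms by auto
  then show ?thesis
    using hamming_weight_add_card_zeros[of k "\<lambda>i. G i j"] unfolding col_weight_def by simp
qed

lemma card_subsets_containing:
  assumes "t < n" "1 \<le> k"
  shows "card {J \<in> {J. J \<subseteq> {..<n} \<and> card J = k}. t \<in> J} = (n - 1) choose (k - 1)"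
proof -
  define BB where "BB = {B. B \<subseteq> {..<n} - {t} \<and> card B = k - 1}"
  have "{J \<in> {J. J \<subseteq> {..<n} \<and> card J = k}. t \<in> J} = insert t ` BB"
  proof (intro equalityI subsetI)
    fix J assume "J \<in> {J \<in> {J. J \<subseteq> {..<n} \<and> card J = k}. t \<in> J}"
    then have J: "J \<subseteq> {..<n}" "card J = k" "t \<in> J" by auto
    then have "J - {t} \<in> BB"
      using finite_subset[OF J(1)] unfolding BB_def by auto
    moreover have "J = insert t (J - {t})" using J(3) by auto
    ultimately show "J \<in> insert t ` BB" by blast
  next
    fix J assume "J \<in> insert t ` BB"
    then obtain B where B: "B \<subseteq> {..<n} - {t}" "card B = k - 1" "J = insert t B"
      unfolding BB_def by blast
    then have "card J = k"
      using finite_subset[OF B(1)] assms(2) by (auto simp: card_insert_if)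
    then show "J \<in> {J \<in> {J. J \<subseteq> {..<n} \<and> card J = k}. t \<in> J}"
      using B(1,3) assms(1) by auto
  qed
  moreover have "inj_on (insert t) BB"
  proof (rule inj_onI)
    fix B B' assume "B \<in> BB" "B' \<in> BB" "insert t B = insert t B'"
    moreover have "t \<notin> B" "t \<notin> B'" using calculation(1,2) unfolding BB_def by auto
    ultimately show "B = B'" by (metis Diff_insert_absorb)
  qed
  moreover have "card BB = (n - 1) choose (k - 1)"
    unfolding BB_def using n_subsets[of "{..<n} - {t}" "k - 1"] assms(1) by simp
  ultimately show ?thesis by (simp add: card_image)
qed

lemma nth_sorted_list_of_set_enum:
  assumes "finite J" "card J = k"
  shows "strict_mono_on {..<k} (\<lambda>a. sorted_list_of_set J ! a)"
    and "(\<lambda>a. sorted_list_of_set J ! a) ` {..<k} = J"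
proof -
  have len: "length (sorted_list_of_set J) = k" using assms by simp
  have "sorted_wrt (<) (sorted_list_of_set J)" by simp
  then show "strict_mono_on {..<k} (\<lambda>a. sorted_list_of_set J ! a)"
    using len by (intro strict_mono_onI) (simp add: sorted_wrt_nth_less)
  show "(\<lambda>a. sorted_list_of_set J ! a) ` {..<k} = J"
    using len set_conv_nth[of "sorted_list_of_set J"] assms(1) by auto
qed

lemma row_nonzero_off_zero_set:
  fixes G :: "nat \<Rightarrow> nat \<Rightarrow> 'a::comm_ring_1"
  assumes indep: "\<And>J. J \<subseteq> {..<n} \<Longrightarrow> card J = k \<Longrightarrow> rows_independent_on k G J"
    and i: "i < k" and Z: "Z \<subseteq> {..<n}" "card Z = k - 1" "\<forall>j'\<in>Z. G i j' = 0"
    and j: "j < n" "j \<notin> Z"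
  shows "G i j \<noteq> 0"
proof -
  have "finite Z" using Z(1) finite_subset by blast
  then have "card (insert j Z) = k" using Z(2) j(2) i by simp
  then obtain j' where "j' \<in> insert j Z" "G i j' \<noteq> 0"
    using rows_independent_on_imp_row_nonzero[OF indep i] Z(1) j(1) by blast
  then show ?thesis using Z(3) by auto
qed

lemma exists_matching_off_windows_sorted:
  assumes "1 \<le> k" "k \<le> n" "J \<subseteq> {..<n}" "card J = k"
  shows "\<exists>\<rho>. bij_betw \<rho> {..<k} {..<k}
           \<and> (\<forall>a<k. \<not> in_zero_window n k (\<rho> a) (sorted_list_of_set J ! a))"
proof -
  have J: "finite J" using assms(3) finite_subset by blast
  note sorted = nth_sorted_list_of_set_enum[OF J assms(4)]
  have "sorted_list_of_set J ! a < n" if "a < k" for a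
    using sorted(2) assms(3) that by blast
  then interpret column_enum "\<lambda>a. sorted_list_of_set J ! a" n k
    using sorted(1) assms(1,2) by unfold_locales simp_all
  show ?thesis by (rule exists_matching_off_windows)
qed

lemma exists_matrix_zero_windows:
  fixes n k :: nat
  assumes k: "1 \<le> k" "k \<le> n"
    and q: "(n - 1) choose (k - 1) < card (UNIV :: 'a::{finite,field} set)"
  shows "\<exists>G :: nat \<Rightarrow> nat \<Rightarrow> 'a.
           (\<forall>i<k. \<forall>j<n. G i j = 0 \<longleftrightarrow> in_zero_window n k i j)
         \<and> (\<forall>J. J \<subseteq> {..<n} \<and> card J = k \<longrightarrow> rows_independent_on k G J)"
proof -
  define JJ where "JJ = {J. J \<subseteq> {..<n} \<and> card J = k}"
  define col_nth :: "nat set \<Rightarrow> nat \<Rightarrow> nat" where "col_nth J = (\<lambda>a. sorted_list_of_set J ! a)" for J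
  have JJ: "J \<subseteq> {..<n}" "finite J" "card J = k" if "J \<in> JJ" for J
    using that finite_subset unfolding JJ_def by auto
  have col_nth: "strict_mono_on {..<k} (col_nth J)" "col_nth J ` {..<k} = J" if "J \<in> JJ" for J
    unfolding col_nth_def using nth_sorted_list_of_set_enum[OF JJ(2,3)[OF that]] by simp_all
  have "\<forall>J\<in>JJ. \<exists>\<rho>. bij_betw \<rho> {..<k} {..<k} \<and> (\<forall>a<k. \<not> in_zero_window n k (\<rho> a) (col_nth J a))"
    using exists_matching_off_windows_sorted[OF k] unfolding JJ_def col_nth_def by blast
  from bchoice[OF this] obtain match where match: "\<forall>J\<in>JJ. bij_betw (match J) {..<k} {..<k}
      \<and> (\<forall>a<k. \<not> in_zero_window n k (match J a) (col_nth J a))"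
    by blast
  have "finite JJ" unfolding JJ_def by (rule finite_subset[of _ "Pow {..<n}"]) auto
  then interpret matched_subsets k n JJ col_nth match "\<lambda>i j. \<not> in_zero_window n k i j"
    by unfold_locales (simp_all add: col_nth JJ(1) match)
  have "card {J\<in>JJ. t \<in> J} < card (UNIV :: 'a set)" if "t < n" for t
    using card_subsets_containing[OF that k(1)] q unfolding JJ_def by simp
  then obtain G :: "nat \<Rightarrow> nat \<Rightarrow> 'a" where G: "supported G"
    "\<forall>J\<in>JJ. det (minor_mat G (match J) (col_nth J) k) \<noteq> 0"
    using exists_supported_minors_nonzero by blast
  have indep: "rows_independent_on k G J" if "J \<subseteq> {..<n}" "card J = k" for J
    using rows_independent_on_if_det_minor_mat[of G "match J" "col_nth J" k] G(2) match
      col_nth(2) that unfolding JJ_def by simp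
  have "G i j \<noteq> 0" if ij: "i < k" "j < n" "\<not> in_zero_window n k i j" for i j
    using row_nonzero_off_zero_set[OF indep ij(1) _ card_zero_window_row[OF ij(1) k(2)]] ij G(1)
    unfolding supported_def by auto
  then show ?thesis using G(1) indep unfolding supported_def by blast
qed

theorem mainTheorem1:
  fixes n k :: nat
  assumes "1 \<le> k" "k \<le> n"
    and "card (UNIV :: 'a::{finite,field} set) > (n - 1) choose (k - 1)"
  shows "\<exists>G :: nat \<Rightarrow> nat \<Rightarrow> 'a.
           generates_MDS k n G
         \<and> (\<forall>i<k. row_weight n G i = n - k + 1)
         \<and> (\<forall>j1<n. \<forall>j2<n. \<bar>int (col_weight k G j1) - int (col_weight k G j2)\<bar> \<le> 1)"
proof -
  obtain G :: "nat \<Rightarrow> nat \<Rightarrow> 'a" where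
    zeros: "\<forall>i<k. \<forall>j<n. G i j = 0 \<longleftrightarrow> in_zero_window n k i j" and
    indep: "\<forall>J. J \<subseteq> {..<n} \<and> card J = k \<longrightarrow> rows_independent_on k G J"
    using exists_matrix_zero_windows[OF assms] by blast
  have rows: "\<forall>i<k. row_weight n G i = n - k + 1"
    using row_weight_zero_window assms(1,2) zeros by blast
  have "generates_MDS k n G"
    using generates_MDS_if_rows_independent_on_subsets[of k n 0 G] rows indep assms(1,2) by simp
  moreover have "\<bar>int (col_weight k G j1) - int (col_weight k G j2)\<bar> \<le> 1"
    if "j1 < n" "j2 < n" for j1 j2
    using col_weight_add_card_zero_window[of k G j1 n] col_weight_add_card_zero_window[of k G j2 n]
      card_zero_window_col_bounds[OF that(1) assms(1,2)]
      card_zero_window_col_bounds[OF that(2) assms(1,2)] zeros that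
    by simp
  ultimately show ?thesis using rows by blast
qed

end
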